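(* Let $\mathcal{G}\leq\mathrm{Homeo}(M)$ be locally approximating. Let $U$ be a regular open subset of $M$ that is compactly contained in a single chart of $M$, and let $V\subseteq U$ be compactly contained in $U$. Then there is $W\in\mathcal{D}_{\mathcal{G}}$ with $W\subseteq U$ such that $V$ is compactly contained in $W$.
   Context: $M$ is a compact, connected topological manifold of positive dimension, possibly with boundary; $\mathrm{Homeo}(M)$ has the compact-open topology; $\mathcal{G}[U]$ is the subgroup of elements of $\mathcal{G}$ acting as the identity on $M\setminus U$. $\mathcal{G}$ is locally approximating if: (1) for every open $U$ with compact closure in a single Euclidean chart and not accumulating on $\partial M$, $\mathcal{G}[U]$ is dense in $\mathrm{Homeo}(M)[U]$; and (2) if $\partial M\neq\emptyset$, either (a) $\mathcal{G}$ consists of compactly supported homeomorphisms of $M\setminus\partial M$, or (b) for every open $U$ with compact closure in a single Euclidean chart, $\mathcal{G}[U]$ is dense in $\mathrm{Homeo}(M)[U]$. A regular open set is an open set equal to the interior of its closure. The extended support $\mathrm{supp}^e g$ is the interior of the closure of $\{x:g(x)\neq x\}$, and $\mathcal{D}_{\mathcal{G}}=\{\mathrm{supp}^e g: g\in\mathcal{G}\}$. A collared ball in $M$ is the image of an embedding of the closed unit ball of $\mathbb{R}^{\dim M}$ extending to an embedding of the radius-$2$ ball; $A$ is compactly contained in $B$ if $A$ is contained in a collared ball contained in the interior of $B$. *)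

theory Defs
  imports "HOL-Analysis.Analysis"
begin

text \<open>Closed half-space H^n inside Euclidean n-space (points nat => real vanishing from index n on).\<close>
definition half_space :: "nat \<Rightarrow> (nat \<Rightarrow> real) topology" where
  "half_space n = subtopology (Euclidean_space n) {x. 0 \<le> x 0}"

definition eball :: "nat \<Rightarrow> real \<Rightarrow> (nat \<Rightarrow> real) set" where
  "eball n r = {x \<in> topspace (Euclidean_space n). (\<Sum>i<n. (x i)\<^sup>2) \<le> r\<^sup>2}"

definition is_chart :: "'a topology \<Rightarrow> nat \<Rightarrow> 'a set \<Rightarrow> ('a \<Rightarrow> nat \<Rightarrow> real) \<Rightarrow> bool" where
  "is_chart M n C \<phi> \<longleftrightarrow> openin M C \<and>
     (\<exists>W. openin (half_space n) W \<and> homeomorphic_map (subtopology M C) (subtopology (half_space n) W) \<phi>)"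

definition chart_domain :: "'a topology \<Rightarrow> nat \<Rightarrow> 'a set \<Rightarrow> bool" where
  "chart_domain M n C \<longleftrightarrow> (\<exists>\<phi>. is_chart M n C \<phi>)"

definition topological_manifold :: "'a topology \<Rightarrow> nat \<Rightarrow> bool" where
  "topological_manifold M n \<longleftrightarrow> Hausdorff_space M \<and> second_countable M \<and>
     (\<forall>p\<in>topspace M. \<exists>C. chart_domain M n C \<and> p \<in> C)"

definition mboundary :: "'a topology \<Rightarrow> nat \<Rightarrow> 'a set" where
  "mboundary M n = {p \<in> topspace M. \<exists>C \<phi>. is_chart M n C \<phi> \<and> p \<in> C \<and> \<phi> p 0 = 0}"

definition collared_ball :: "'a topology \<Rightarrow> nat \<Rightarrow> 'a set \<Rightarrow> bool" where
  "collared_ball M n B \<longleftrightarrow>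
     (\<exists>e. embedding_map (subtopology (Euclidean_space n) (eball n 2)) M e \<and> B = e ` eball n 1)"

definition compactly_contained :: "'a topology \<Rightarrow> nat \<Rightarrow> 'a set \<Rightarrow> 'a set \<Rightarrow> bool" where
  "compactly_contained M n A B \<longleftrightarrow>
     (\<exists>D. collared_ball M n D \<and> A \<subseteq> D \<and> D \<subseteq> M interior_of B)"

definition regular_open :: "'a topology \<Rightarrow> 'a set \<Rightarrow> bool" where
  "regular_open M U \<longleftrightarrow> openin M U \<and> M interior_of (M closure_of U) = U"

definition Homeo :: "'a topology \<Rightarrow> ('a \<Rightarrow> 'a) set" where
  "Homeo M = {f. homeomorphic_map M M f \<and> (\<forall>x. x \<notin> topspace M \<longrightarrow> f x = x)}"

definition homeo_inv :: "'a topology \<Rightarrow> ('a \<Rightarrow> 'a) \<Rightarrow> 'a \<Rightarrow> 'a" where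
  "homeo_inv M f = (\<lambda>x. if x \<in> topspace M then inv_into (topspace M) f x else x)"

definition homeo_subgroup :: "'a topology \<Rightarrow> ('a \<Rightarrow> 'a) set \<Rightarrow> bool" where
  "homeo_subgroup M G \<longleftrightarrow> G \<subseteq> Homeo M \<and> id \<in> G \<and>
     (\<forall>f\<in>G. \<forall>g\<in>G. f \<circ> g \<in> G) \<and> (\<forall>f\<in>G. homeo_inv M f \<in> G)"

definition rel_supp :: "'a topology \<Rightarrow> ('a \<Rightarrow> 'a) set \<Rightarrow> 'a set \<Rightarrow> ('a \<Rightarrow> 'a) set" where
  "rel_supp M G U = {g\<in>G. \<forall>x\<in>topspace M - U. g x = x}"

text \<open>A is dense in B w.r.t. the compact-open topology (subbasic sets {f. f ` K \<subseteq> Ob},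
  K compact, O open): every basic neighbourhood of a point of B meets A.\<close>
definition co_dense :: "'a topology \<Rightarrow> ('a \<Rightarrow> 'a) set \<Rightarrow> ('a \<Rightarrow> 'a) set \<Rightarrow> bool" where
  "co_dense M A B \<longleftrightarrow>
     (\<forall>f\<in>B. \<forall>F. finite F \<and> (\<forall>(K,Ob)\<in>F. compactin M K \<and> openin M Ob \<and> f ` K \<subseteq> Ob) \<longrightarrow>
        (\<exists>g\<in>A. \<forall>(K,Ob)\<in>F. g ` K \<subseteq> Ob))"

definition in_single_chart :: "'a topology \<Rightarrow> nat \<Rightarrow> 'a set \<Rightarrow> bool" where
  "in_single_chart M n S \<longleftrightarrow> (\<exists>C. chart_domain M n C \<and> S \<subseteq> C)"

definition locally_approximating :: "'a topology \<Rightarrow> nat \<Rightarrow> ('a \<Rightarrow> 'a) set \<Rightarrow> bool" where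
  "locally_approximating M n G \<longleftrightarrow>
     (\<forall>U. openin M U \<and> compactin M (M closure_of U) \<and> in_single_chart M n (M closure_of U)
          \<and> M closure_of U \<inter> mboundary M n = {}
          \<longrightarrow> co_dense M (rel_supp M G U) (rel_supp M (Homeo M) U)) \<and>
     (mboundary M n \<noteq> {} \<longrightarrow>
        (\<forall>g\<in>G. \<exists>K. compactin (subtopology M (topspace M - mboundary M n)) K \<and>
                    {x\<in>topspace M. g x \<noteq> x} \<subseteq> K)
      \<or> (\<forall>U. openin M U \<and> compactin M (M closure_of U) \<and> in_single_chart M n (M closure_of U)
          \<longrightarrow> co_dense M (rel_supp M G U) (rel_supp M (Homeo M) U)))"

definition ext_supp :: "'a topology \<Rightarrow> ('a \<Rightarrow> 'a) \<Rightarrow> 'a set" where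
  "ext_supp M g = M interior_of (M closure_of {x\<in>topspace M. g x \<noteq> x})"

definition D_set :: "'a topology \<Rightarrow> ('a \<Rightarrow> 'a) set \<Rightarrow> 'a set set" where
  "D_set M G = ext_supp M ` G"

end

theory Submission
  imports Defs "HOL-Homology.Invariance_of_Domain"
begin

(*
  Let e be the collar of a ball with V \<subseteq> e(B_1) \<subseteq> U, where B_r is the closed Euclidean
  r-ball; by compactness e(B_r) \<subseteq> U for some 1 < r < 2. Sliding each point of the open
  r-ball along its chord parallel to the first axis gives a homeomorphism h of M which is
  the identity off O = e(open B_r) and moves every point of e(B_s), 1 < s < r. Invariance
  of domain makes O open and keeps its closure off the boundary, so h can be approximated
  by elements of G supported in O. Moving every point of a compact set K is an open
  condition in the compact-open topology (cover K by finitely many compact pieces C with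
  h(C) inside an open set disjoint from C), so some such g \<in> G moves every point of e(B_s).
  Its extended support W lies in the regular open set U and contains the open set
  e(open B_s) \<supseteq> e(B_1) \<supseteq> V.
*)

section \<open>Euclidean balls\<close>

definition sqnorm :: "nat \<Rightarrow> (nat \<Rightarrow> real) \<Rightarrow> real" where
  "sqnorm n x = (\<Sum>i<n. (x i)\<^sup>2)"

definition open_eball :: "nat \<Rightarrow> real \<Rightarrow> (nat \<Rightarrow> real) set" where
  "open_eball n r = {x \<in> topspace (Euclidean_space n). sqnorm n x < r\<^sup>2}"

lemma eball_sqnorm: "eball n r = {x \<in> topspace (Euclidean_space n). sqnorm n x \<le> r\<^sup>2}"
  by (simp add: eball_def sqnorm_def)

lemma topspace_Int_eball [simp]: "topspace (Euclidean_space n) \<inter> eball n r = eball n r"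
  by (auto simp: eball_def)

lemma sqnorm_split0: "1 \<le> n \<Longrightarrow> sqnorm n x = (x 0)\<^sup>2 + (\<Sum>i\<in>{1..<n}. (x i)\<^sup>2)"
  unfolding sqnorm_def lessThan_atLeast0 by (subst sum.atLeast_Suc_lessThan) auto

lemma continuous_map_Euclidean_space_coordinate:
  "continuous_map (Euclidean_space n) euclideanreal (\<lambda>x. x i)"
  unfolding Euclidean_space_def
  by (rule continuous_map_from_subtopology) (metis UNIV_I continuous_map_product_coordinates)

lemma continuous_map_sqnorm: "continuous_map (Euclidean_space n) euclideanreal (sqnorm n)"
  unfolding sqnorm_def by (intro continuous_intros continuous_map_Euclidean_space_coordinate) simp

lemma continuous_map_update_coordinate:
  assumes "i < n" and F: "continuous_map (Euclidean_space n) euclideanreal F"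
  shows "continuous_map (Euclidean_space n) (Euclidean_space n) (\<lambda>x. x(i := F x))"
proof -
  have "continuous_map (Euclidean_space n) (Euclidean_space n)
          (\<lambda>x j. if j < n then (if j = i then F x else x j) else 0)"
    by (subst continuous_map_componentwise_Euclidean_space)
      (simp add: F continuous_map_Euclidean_space_coordinate)
  then show ?thesis
    by (rule continuous_map_eq) (use \<open>i < n\<close> in \<open>auto simp: topspace_Euclidean_space\<close>)
qed

lemma openin_open_eball: "openin (Euclidean_space n) (open_eball n r)"
  using openin_continuous_map_preimage[OF continuous_map_sqnorm, of "{..<r\<^sup>2}"]
  by (simp add: open_eball_def)

lemma closedin_eball: "closedin (Euclidean_space n) (eball n r)"
  using closedin_continuous_map_preimage[OF continuous_map_sqnorm, of "{..r\<^sup>2}"]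
  by (simp add: eball_sqnorm)

lemma compactin_eball:
  assumes "0 \<le> r" shows "compactin (Euclidean_space n) (eball n r)"
proof -
  let ?box = "PiE UNIV (\<lambda>i. if i < n then {-r..r} else {0::real})"
  have "eball n r \<subseteq> ?box"
  proof
    fix x assume x: "x \<in> eball n r"
    have "x i \<in> {-r..r}" if "i < n" for i
    proof -
      have "(x i)\<^sup>2 \<le> (\<Sum>j<n. (x j)\<^sup>2)"
        by (rule member_le_sum) (use that in auto)
      also have "\<dots> \<le> r\<^sup>2" using x by (simp add: eball_def)
      finally have "\<bar>x i\<bar> \<le> r" using assms by (metis abs_le_square_iff abs_of_nonneg)
      then show ?thesis by (simp add: abs_le_iff)
    qed
    then show "x \<in> ?box"
      using x by (auto simp: PiE_iff eball_def topspace_Euclidean_space)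
  qed
  moreover have "compactin (powertop_real UNIV) ?box"
    by (subst compactin_PiE) auto
  moreover have "closedin (powertop_real UNIV) (eball n r)"
  proof (rule closedin_trans_full)
    show "closedin (subtopology (powertop_real UNIV) (topspace (Euclidean_space n))) (eball n r)"
      using closedin_eball[of n r] by (simp add: Euclidean_space_def topspace_Euclidean_space)
  qed (rule closedin_Euclidean_space)
  ultimately have "compactin (powertop_real UNIV) (eball n r)"
    by (metis closed_compactin)
  then show ?thesis
    by (auto simp: Euclidean_space_def compactin_subtopology eball_def topspace_Euclidean_space)
qed

lemma eball_subset_eball:
  assumes "0 \<le> \<rho>" "\<rho> \<le> r" shows "eball n \<rho> \<subseteq> eball n r"
proof -
  have "\<rho>\<^sup>2 \<le> r\<^sup>2" using assms by (simp add: power_mono)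
  then show ?thesis by (auto simp: eball_sqnorm)
qed

lemma open_eball_subset_eball: "open_eball n r \<subseteq> eball n r"
  by (auto simp: eball_sqnorm open_eball_def)

lemma eball_subset_open_eball:
  assumes "0 \<le> \<rho>" "\<rho> < r" shows "eball n \<rho> \<subseteq> open_eball n r"
proof -
  have "\<rho>\<^sup>2 < r\<^sup>2" using assms by (simp add: power_strict_mono)
  then show ?thesis by (auto simp: eball_sqnorm open_eball_def)
qed

lemma compactin_disjoint_larger_eball:
  assumes S: "compactin (Euclidean_space n) S" "S \<inter> eball n \<rho> = {}" and \<rho>: "0 \<le> \<rho>" "\<rho> < R"
  obtains r where "\<rho> < r" "r < R" "S \<inter> eball n r = {}"
proof -
  have "\<rho>\<^sup>2 < R\<^sup>2" using \<rho> by (simp add: power_strict_mono)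
  have "\<exists>T. \<rho>\<^sup>2 < T \<and> T \<le> R\<^sup>2 \<and> (\<forall>x\<in>S. T \<le> sqnorm n x)"
  proof (cases "S = {}")
    case True
    then show ?thesis using \<open>\<rho>\<^sup>2 < R\<^sup>2\<close> by blast
  next
    case False
    have "compact (sqnorm n ` S)"
      using image_compactin[OF S(1) continuous_map_sqnorm] by simp
    then obtain x0 where "x0 \<in> S" and min: "\<forall>x\<in>S. sqnorm n x0 \<le> sqnorm n x"
      using False compact_attains_inf[of "sqnorm n ` S"] by blast
    moreover have "x0 \<in> topspace (Euclidean_space n)"
      using S(1) \<open>x0 \<in> S\<close> compactin_subset_topspace by blast
    ultimately have "\<rho>\<^sup>2 < sqnorm n x0" using S(2) by (auto simp: eball_sqnorm)
    then show ?thesis using min \<open>\<rho>\<^sup>2 < R\<^sup>2\<close>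
      by (intro exI[of _ "min (R\<^sup>2) (sqnorm n x0)"]) (auto simp: min_le_iff_disj)
  qed
  then obtain T where T: "\<rho>\<^sup>2 < T" "T \<le> R\<^sup>2" "\<And>x. x \<in> S \<Longrightarrow> T \<le> sqnorm n x" by blast
  define r where "r = sqrt ((\<rho>\<^sup>2 + T) / 2)"
  have "0 < T" using T(1) zero_le_power2[of \<rho>] by (meson le_less_trans)
  then have "0 \<le> (\<rho>\<^sup>2 + T) / 2" by simp
  then have r2: "r\<^sup>2 = (\<rho>\<^sup>2 + T) / 2" and "0 \<le> r" by (simp_all add: r_def)
  have "\<rho>\<^sup>2 < r\<^sup>2" "r\<^sup>2 < T" using T(1) r2 by simp_all
  moreover have "0 \<le> R" using \<rho> by simp
  ultimately have "\<rho> < r" "r < R"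
    using T(2) \<open>0 \<le> r\<close> power_less_imp_less_base[of r 2 R] power_less_imp_less_base[of \<rho> 2 r]
    by simp_all
  moreover have "S \<inter> eball n r = {}"
  proof -
    have False if "x \<in> S" "x \<in> eball n r" for x
      using T(3)[OF that(1)] that(2) \<open>r\<^sup>2 < T\<close> by (simp add: eball_sqnorm)
    then show ?thesis by blast
  qed
  ultimately show thesis by (rule that)
qed

lemma openin_subset_half_space_pos:
  assumes S: "openin (Euclidean_space n) S" "S \<subseteq> {z. 0 \<le> z 0}" and "y \<in> S" and "1 \<le> n"
  shows "0 < y 0"
proof -
  define p where "p t = (\<lambda>i. if i < n then (if i = 0 then y 0 - t else y i) else 0)" for t
  have "continuous_map euclideanreal (Euclidean_space n) p"
    unfolding p_def by (subst continuous_map_componentwise_Euclidean_space) (auto intro: continuous_intros)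
  from openin_continuous_map_preimage[OF this S(1)] have "open {t. p t \<in> S}"
    by simp
  moreover have "p 0 = y"
    using S(1) \<open>y \<in> S\<close> openin_subset by (fastforce simp: p_def topspace_Euclidean_space)
  ultimately obtain \<epsilon> where "\<epsilon> > 0" "ball 0 \<epsilon> \<subseteq> {t. p t \<in> S}"
    using \<open>y \<in> S\<close> open_contains_ball_eq by (metis mem_Collect_eq)
  then have "p (\<epsilon>/2) \<in> S" by (simp add: subset_iff)
  then have "0 \<le> y 0 - \<epsilon>/2" using S(2) \<open>1 \<le> n\<close> by (auto simp: p_def)
  with \<open>\<epsilon> > 0\<close> show ?thesis by linarith
qed

lemma inj_fixing_compl_image_subset:
  "\<lbrakk>inj f; \<And>x. x \<notin> S \<Longrightarrow> f x = x\<rbrakk> \<Longrightarrow> f ` S \<subseteq> S"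
  by (metis image_subsetI injD)

lemma image_eball_subset_if_fixes_outside:
  assumes "continuous_map (Euclidean_space n) (Euclidean_space n) \<psi>" "inj \<psi>"
    and stays: "\<And>x. r\<^sup>2 \<le> sqnorm n x \<Longrightarrow> \<psi> x = x"
  shows "\<psi> ` eball n r \<subseteq> eball n r"
proof
  fix y assume "y \<in> \<psi> ` eball n r"
  then obtain x where x: "x \<in> eball n r" "y = \<psi> x" by blast
  then have "y \<in> topspace (Euclidean_space n)"
    using assms(1) continuous_map_image_subset_topspace by (fastforce simp: eball_def)
  moreover have "\<psi> ` {x. sqnorm n x < r\<^sup>2} \<subseteq> {x. sqnorm n x < r\<^sup>2}"
    using assms(2) stays by (intro inj_fixing_compl_image_subset) (simp_all add: not_less)
  ultimately show "y \<in> eball n r"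
    using x stays by (cases "sqnorm n x < r\<^sup>2") (auto simp: eball_sqnorm not_less)
qed

section \<open>Pushing points along chords\<close>

text \<open>On the chord \<open>[-L, L]\<close>, \<open>push L\<close> is the piecewise linear homeomorphism fixing the
  end points and sending \<open>0\<close> to \<open>L / 2\<close>; off the chord it is the identity.\<close>

definition push :: "real \<Rightarrow> real \<Rightarrow> real" where
  "push L t = t + max 0 (L - \<bar>t\<bar>) / 2"

definition push_inv :: "real \<Rightarrow> real \<Rightarrow> real" where
  "push_inv L s = s - max 0 (min (L - s) ((L + s) / 3))"

lemma push_eq_self_iff: "push L t = t \<longleftrightarrow> L \<le> \<bar>t\<bar>"
  by (auto simp: push_def max_def)

lemma push_nonneg: "\<lbrakk>0 \<le> t; t < L\<rbrakk> \<Longrightarrow> push L t = (L + t) / 2"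
  by (simp add: push_def field_simps)

lemma push_neg: "\<lbrakk>t < 0; - L < t\<rbrakk> \<Longrightarrow> push L t = (L + 3 * t) / 2"
  by (simp add: push_def field_simps)

lemma push_inv_eq_self: "L \<le> \<bar>s\<bar> \<Longrightarrow> push_inv L s = s"
  unfolding push_inv_def by (auto simp: max_def min_def abs_if split: if_splits)

lemma push_inv_upper: "\<lbrakk>L \<le> 2 * s; s < L\<rbrakk> \<Longrightarrow> push_inv L s = 2 * s - L"
  unfolding push_inv_def by (auto simp: max_def min_def)

lemma push_inv_lower: "\<lbrakk>- L < s; 2 * s < L\<rbrakk> \<Longrightarrow> push_inv L s = (2 * s - L) / 3"
  unfolding push_inv_def by (auto simp: max_def min_def field_simps)

lemma push_inv_push [simp]: "push_inv L (push L t) = t"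
proof -
  consider "L \<le> \<bar>t\<bar>" | "0 \<le> t" "t < L" | "t < 0" "- L < t" by linarith
  then show ?thesis
  proof cases
    case 1 then show ?thesis by (simp add: push_eq_self_iff[THEN iffD2] push_inv_eq_self)
  next
    case 2 then show ?thesis by (simp add: push_nonneg push_inv_upper field_simps)
  next
    case 3 then show ?thesis by (simp add: push_neg push_inv_lower field_simps)
  qed
qed

lemma push_push_inv [simp]: "push L (push_inv L s) = s"
proof -
  consider "L \<le> \<bar>s\<bar>" | "L \<le> 2 * s" "s < L" | "- L < s" "2 * s < L" by linarith
  then show ?thesis
  proof cases
    case 1 then show ?thesis by (simp add: push_eq_self_iff[THEN iffD2] push_inv_eq_self)
  next
    case 2 then show ?thesis by (simp add: push_nonneg push_inv_upper field_simps)
  next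
    case 3 then show ?thesis by (simp add: push_neg push_inv_lower field_simps)
  qed
qed

text \<open>The chord of the \<open>r\<close>-ball through \<open>x\<close> parallel to the \<open>0\<close>-th axis consists of the
  points with \<open>0\<close>-th coordinate in \<open>[-half_chord n r x, half_chord n r x]\<close>.\<close>

definition half_chord :: "nat \<Rightarrow> real \<Rightarrow> (nat \<Rightarrow> real) \<Rightarrow> real" where
  "half_chord n r x = sqrt (max 0 (r\<^sup>2 - (\<Sum>i\<in>{1..<n}. (x i)\<^sup>2)))"

definition ball_push :: "nat \<Rightarrow> real \<Rightarrow> (nat \<Rightarrow> real) \<Rightarrow> nat \<Rightarrow> real" where
  "ball_push n r x = x(0 := push (half_chord n r x) (x 0))"

definition ball_push_inv :: "nat \<Rightarrow> real \<Rightarrow> (nat \<Rightarrow> real) \<Rightarrow> nat \<Rightarrow> real" where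
  "ball_push_inv n r x = x(0 := push_inv (half_chord n r x) (x 0))"

lemma half_chord_update0 [simp]: "half_chord n r (x(0 := v)) = half_chord n r x"
proof -
  have "(\<Sum>i\<in>{1..<n}. ((x(0 := v)) i)\<^sup>2) = (\<Sum>i\<in>{1..<n}. (x i)\<^sup>2)"
    by (rule sum.cong) auto
  then show ?thesis by (simp add: half_chord_def)
qed

lemma ball_push_inv_push [simp]: "ball_push_inv n r (ball_push n r x) = x"
  by (simp add: ball_push_def ball_push_inv_def)

lemma ball_push_push_inv [simp]: "ball_push n r (ball_push_inv n r x) = x"
  by (simp add: ball_push_def ball_push_inv_def)

lemma abs_less_half_chord_iff:
  assumes "1 \<le> n" shows "\<bar>x 0\<bar> < half_chord n r x \<longleftrightarrow> sqnorm n x < r\<^sup>2"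
proof -
  have "\<bar>x 0\<bar> < half_chord n r x \<longleftrightarrow> (x 0)\<^sup>2 < max 0 (r\<^sup>2 - (\<Sum>i\<in>{1..<n}. (x i)\<^sup>2))"
    by (metis half_chord_def real_sqrt_abs real_sqrt_less_iff)
  also have "\<dots> \<longleftrightarrow> (x 0)\<^sup>2 + (\<Sum>i\<in>{1..<n}. (x i)\<^sup>2) < r\<^sup>2"
    using zero_le_power2[of "x 0"] by (auto simp: less_max_iff_disj)
  also have "\<dots> \<longleftrightarrow> sqnorm n x < r\<^sup>2"
    by (simp add: sqnorm_split0[OF assms])
  finally show ?thesis .
qed

lemma ball_push_eq_self_iff:
  assumes "1 \<le> n" shows "ball_push n r x = x \<longleftrightarrow> r\<^sup>2 \<le> sqnorm n x"
proof -
  have "ball_push n r x = x \<longleftrightarrow> x 0 = push (half_chord n r x) (x 0)"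
    by (simp add: ball_push_def fun_upd_idem_iff)
  also have "\<dots> \<longleftrightarrow> half_chord n r x \<le> \<bar>x 0\<bar>"
    by (metis push_eq_self_iff)
  also have "\<dots> \<longleftrightarrow> r\<^sup>2 \<le> sqnorm n x"
    by (metis abs_less_half_chord_iff[OF assms] not_less)
  finally show ?thesis .
qed

lemma continuous_map_ball_push:
  "1 \<le> n \<Longrightarrow> continuous_map (Euclidean_space n) (Euclidean_space n) (ball_push n r)"
  unfolding ball_push_def[abs_def] push_def half_chord_def
  by (intro continuous_map_update_coordinate continuous_intros continuous_map_Euclidean_space_coordinate) auto

lemma continuous_map_ball_push_inv:
  "1 \<le> n \<Longrightarrow> continuous_map (Euclidean_space n) (Euclidean_space n) (ball_push_inv n r)"
  unfolding ball_push_inv_def[abs_def] push_inv_def half_chord_def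
  by (intro continuous_map_update_coordinate continuous_intros continuous_map_Euclidean_space_coordinate) auto

section \<open>Charts and invariance of domain\<close>

lemma continuous_map_chart:
  assumes "is_chart M n C \<phi>"
  shows "continuous_map (subtopology M C) (Euclidean_space n) \<phi>"
proof -
  obtain W where "homeomorphic_map (subtopology M C) (subtopology (half_space n) W) \<phi>"
    using assms by (auto simp: is_chart_def)
  then have "continuous_map (subtopology M C) (subtopology (Euclidean_space n) {x. 0 \<le> x 0}) \<phi>"
    unfolding half_space_def by (meson continuous_map_into_fulltopology homeomorphic_imp_continuous_map)
  then show ?thesis by (rule continuous_map_into_fulltopology)
qed

lemma chart_nonneg:
  assumes "is_chart M n C \<phi>" "p \<in> C" shows "0 \<le> \<phi> p 0"
proof -
  obtain W where "openin M C" "homeomorphic_map (subtopology M C) (subtopology (half_space n) W) \<phi>"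
    using assms by (auto simp: is_chart_def)
  then have "\<phi> ` (topspace M \<inter> C) \<subseteq> topspace (half_space n)"
    by (metis continuous_map_image_subset_topspace homeomorphic_imp_continuous_map
        continuous_map_into_fulltopology topspace_subtopology)
  moreover have "p \<in> topspace M \<inter> C"
    using assms(2) \<open>openin M C\<close> openin_subset by blast
  ultimately show ?thesis by (auto simp: half_space_def)
qed

lemma inj_on_chart: "is_chart M n C \<phi> \<Longrightarrow> inj_on \<phi> C"
  unfolding is_chart_def
  by (metis homeomorphic_imp_injective_map openin_subset topspace_subtopology_subset)

lemma openin_chart_image:
  assumes chart: "is_chart M n C \<phi>" and N: "openin (Euclidean_space n) N"
    and f: "continuous_map (subtopology (Euclidean_space n) N) M f" "inj_on f N" "f ` N \<subseteq> C"
  shows "openin (Euclidean_space n) (\<phi> ` f ` N)"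
proof -
  have "continuous_map (subtopology (Euclidean_space n) N) (subtopology M C) f"
    using f by (auto simp: continuous_map_in_subtopology image_subset_iff)
  then have "continuous_map (subtopology (Euclidean_space n) N) (Euclidean_space n) (\<phi> \<circ> f)"
    using continuous_map_chart[OF chart] by (rule continuous_map_compose)
  moreover have "inj_on (\<phi> \<circ> f) N"
    using f inj_on_chart[OF chart] by (metis comp_inj_on inj_on_subset)
  ultimately have "openin (Euclidean_space n) ((\<phi> \<circ> f) ` N)"
    by (rule invariance_of_domain_Euclidean_space[OF N])
  then show ?thesis by (simp add: image_comp)
qed

lemma openin_image_in_chart:
  assumes chart: "is_chart M n C \<phi>" and N: "openin (Euclidean_space n) N"
    and f: "continuous_map (subtopology (Euclidean_space n) N) M f" "inj_on f N" "f ` N \<subseteq> C"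
  shows "openin M (f ` N)"
proof -
  obtain W where C: "openin M C"
    and hom: "homeomorphic_map (subtopology M C) (subtopology (half_space n) W) \<phi>"
    using chart by (auto simp: is_chart_def)
  have fN: "f ` N \<subseteq> topspace (subtopology M C)"
    using f C openin_subset by (fastforce simp: topspace_subtopology)
  then have "\<phi> ` f ` N \<subseteq> topspace (subtopology (half_space n) W)"
    using hom homeomorphic_imp_continuous_map continuous_map_image_subset_topspace by blast
  then have "\<phi> ` f ` N \<subseteq> {x. 0 \<le> x 0} \<inter> W"
    by (auto simp: half_space_def)
  with openin_chart_image[OF assms] have "openin (subtopology (half_space n) W) (\<phi> ` f ` N)"
    unfolding half_space_def subtopology_subtopology by (rule subset_openin_subtopology)
  then have "openin (subtopology M C) (f ` N)"
    using homeomorphic_map_openness[OF hom fN] by blast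
  then show ?thesis using C openin_trans_full by blast
qed

lemma openin_preimage_from_open_subtopology:
  assumes "openin X N" and "continuous_map (subtopology X N) Y f" and "openin Y C"
  shows "openin X {x \<in> N. f x \<in> C}"
proof -
  have "openin (subtopology X N) {x \<in> N. f x \<in> C}"
    using openin_continuous_map_preimage[OF assms(2,3)] assms(1) openin_subset
    by (metis topspace_subtopology_subset)
  then show ?thesis using assms(1) openin_trans_full by blast
qed

lemma openin_image_manifold:
  assumes M: "topological_manifold M n" and N: "openin (Euclidean_space n) N"
    and f: "continuous_map (subtopology (Euclidean_space n) N) M f" "inj_on f N"
  shows "openin M (f ` N)"
proof (subst openin_subopen, intro ballI)
  fix p assume "p \<in> f ` N"
  then obtain x where x: "x \<in> N" "p = f x" by blast
  then have "p \<in> topspace M"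
    using f N openin_subset continuous_map_image_subset_topspace
    by (metis image_subset_iff topspace_subtopology_subset)
  then obtain C \<phi> where chart: "is_chart M n C \<phi>" and "p \<in> C"
    using M by (auto simp: topological_manifold_def chart_domain_def)
  let ?N = "{y \<in> N. f y \<in> C}"
  have "openin (Euclidean_space n) ?N"
    using chart N f(1) by (intro openin_preimage_from_open_subtopology) (auto simp: is_chart_def)
  moreover have "continuous_map (subtopology (Euclidean_space n) ?N) M f"
    using f(1) by (rule continuous_map_from_subtopology_mono) blast
  ultimately have "openin M (f ` ?N)"
    using f(2) by (intro openin_image_in_chart[OF chart]) (auto intro: inj_on_subset)
  moreover have "p \<in> f ` ?N" using x \<open>p \<in> C\<close> by blast
  ultimately show "\<exists>T. openin M T \<and> p \<in> T \<and> T \<subseteq> f ` N" by blast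
qed

lemma image_disjoint_mboundary:
  assumes "1 \<le> n" and N: "openin (Euclidean_space n) N"
    and f: "continuous_map (subtopology (Euclidean_space n) N) M f" "inj_on f N"
  shows "f ` N \<inter> mboundary M n = {}"
proof -
  have False if x: "x \<in> N" "f x \<in> mboundary M n" for x
  proof -
    obtain C \<phi> where chart: "is_chart M n C \<phi>" and "f x \<in> C" "\<phi> (f x) 0 = 0"
      using x(2) unfolding mboundary_def by blast
    let ?N = "{y \<in> N. f y \<in> C}"
    have "openin (Euclidean_space n) ?N"
      using chart N f(1) by (intro openin_preimage_from_open_subtopology) (auto simp: is_chart_def)
    moreover have "continuous_map (subtopology (Euclidean_space n) ?N) M f"
      using f(1) by (rule continuous_map_from_subtopology_mono) blast
    ultimately have "openin (Euclidean_space n) (\<phi> ` f ` ?N)"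
      using f(2) by (intro openin_chart_image[OF chart]) (auto intro: inj_on_subset)
    moreover have "\<phi> ` f ` ?N \<subseteq> {z. 0 \<le> z 0}"
      using chart_nonneg[OF chart] by blast
    moreover have "\<phi> (f x) \<in> \<phi> ` f ` ?N" using x \<open>f x \<in> C\<close> by blast
    ultimately have "0 < \<phi> (f x) 0" using \<open>1 \<le> n\<close> by (rule openin_subset_half_space_pos)
    with \<open>\<phi> (f x) 0 = 0\<close> show False by simp
  qed
  then show ?thesis by blast
qed

section \<open>Approximation in the compact-open topology\<close>

lemma displaced_closure_neighbourhood:
  assumes reg: "regular_space M" and Haus: "Hausdorff_space M" and h: "continuous_map M M h"
    and x: "x \<in> topspace M" "h x \<noteq> x"
  obtains N Q where "openin M N" "x \<in> N" "openin M Q"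
    "h ` (M closure_of N) \<subseteq> Q" "disjnt Q (M closure_of N)"
proof -
  have "h x \<in> topspace M" using h x continuous_map_image_subset_topspace by blast
  then obtain P Q where PQ: "openin M P" "openin M Q" "x \<in> P" "h x \<in> Q" "disjnt P Q"
    using Haus[unfolded Hausdorff_space_def, rule_format, of x "h x"] x by auto
  define P' where "P' = P \<inter> {y \<in> topspace M. h y \<in> Q}"
  have "openin M P'"
    unfolding P'_def using PQ openin_continuous_map_preimage[OF h] by blast
  then have "closedin M (topspace M - P') \<and> x \<in> topspace M - (topspace M - P')"
    using PQ x by (auto simp: P'_def)
  then obtain N where N: "openin M N" "x \<in> N" "disjnt (topspace M - P') (M closure_of N)"
    using reg[unfolded regular_space, rule_format] by blast
  then have "M closure_of N \<subseteq> P'"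
    using closure_of_subset_topspace by (fastforce simp: disjnt_iff)
  then show thesis
    using that[OF N(1,2) PQ(2)] PQ(5) by (auto simp: P'_def disjnt_iff)
qed

lemma finite_cover_displaced_compacts:
  assumes M: "compact_space M" "Hausdorff_space M" and h: "continuous_map M M h"
    and K: "compactin M K" and moves: "\<And>x. x \<in> K \<Longrightarrow> h x \<noteq> x"
  obtains F where "finite F" "K \<subseteq> \<Union>(fst ` F)"
    "\<forall>(C, W)\<in>F. compactin M C \<and> openin M W \<and> h ` C \<subseteq> W" "\<forall>(C, W)\<in>F. disjnt W C"
proof -
  have reg: "regular_space M" using M by (rule compact_Hausdorff_imp_regular_space)
  have "\<exists>N Q. openin M N \<and> x \<in> N \<and> openin M Q
              \<and> h ` (M closure_of N) \<subseteq> Q \<and> disjnt Q (M closure_of N)" if x: "x \<in> K" for x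
  proof -
    have "x \<in> topspace M" using K x compactin_subset_topspace by blast
    then obtain N Q where "openin M N" "x \<in> N" "openin M Q"
      "h ` (M closure_of N) \<subseteq> Q" "disjnt Q (M closure_of N)"
      by (rule displaced_closure_neighbourhood[OF reg M(2) h _ moves[OF x]])
    then show ?thesis by blast
  qed
  then obtain N Q where NQ: "\<And>x. x \<in> K \<Longrightarrow> openin M (N x) \<and> x \<in> N x \<and> openin M (Q x)
                  \<and> h ` (M closure_of N x) \<subseteq> Q x \<and> disjnt (Q x) (M closure_of N x)"
    by metis
  have "\<And>U. U \<in> N ` K \<Longrightarrow> openin M U" "K \<subseteq> \<Union>(N ` K)"
    using NQ by blast+
  from compactinD[OF K this] obtain \<F> where \<F>: "finite \<F>" "\<F> \<subseteq> N ` K" "K \<subseteq> \<Union>\<F>"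
    by blast
  then obtain X where X: "finite X" "X \<subseteq> K" "K \<subseteq> \<Union>(N ` X)"
    using finite_subset_image[OF \<F>(1,2)] by blast
  let ?F = "(\<lambda>x. (M closure_of N x, Q x)) ` X"
  have XK: "\<And>x. x \<in> X \<Longrightarrow> x \<in> K" using X(2) by blast
  have "N x \<subseteq> M closure_of N x" if "x \<in> X" for x
    using NQ[OF XK[OF that]] by (simp add: closure_of_subset openin_subset)
  then have "(\<Union>x\<in>X. N x) \<subseteq> (\<Union>x\<in>X. M closure_of N x)" by (rule UN_mono[OF order_refl])
  then have "K \<subseteq> (\<Union>x\<in>X. M closure_of N x)" using X(3) by (rule order_trans[rotated])
  then have cover: "K \<subseteq> \<Union>(fst ` ?F)" by (simp add: image_image)
  have "compactin M (M closure_of N x) \<and> openin M (Q x)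
      \<and> h ` (M closure_of N x) \<subseteq> Q x \<and> disjnt (Q x) (M closure_of N x)" if "x \<in> X" for x
    using NQ[OF XK[OF that]] closedin_compact_space[OF M(1) closedin_closure_of] by simp
  then have "\<forall>(C, W)\<in>?F. compactin M C \<and> openin M W \<and> h ` C \<subseteq> W"
    and "\<forall>(C, W)\<in>?F. disjnt W C" by auto
  moreover have "finite ?F" using X(1) by simp
  ultimately show thesis using cover by (intro that)
qed

lemma co_dense_fixed_point_free:
  assumes M: "compact_space M" "Hausdorff_space M"
    and dense: "co_dense M A B" and "h \<in> B" and h: "continuous_map M M h"
    and K: "compactin M K" and moves: "\<And>x. x \<in> K \<Longrightarrow> h x \<noteq> x"
  obtains g where "g \<in> A" "\<And>x. x \<in> K \<Longrightarrow> g x \<noteq> x"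
proof -
  obtain F where F: "finite F" "K \<subseteq> \<Union>(fst ` F)"
    "\<forall>(C, W)\<in>F. compactin M C \<and> openin M W \<and> h ` C \<subseteq> W" "\<forall>(C, W)\<in>F. disjnt W C"
    by (rule finite_cover_displaced_compacts[OF M h K moves])
  obtain g where g: "g \<in> A" "\<forall>(C, W)\<in>F. g ` C \<subseteq> W"
    using dense[unfolded co_dense_def, THEN bspec, OF \<open>h \<in> B\<close>, THEN spec[of _ F], THEN mp,
        OF conjI[OF F(1,3)]]
    by blast
  show thesis
  proof (rule that[OF g(1)])
    fix y assume "y \<in> K"
    then obtain p where p: "p \<in> F" "y \<in> fst p" using F(2) by blast
    obtain C W where CW: "p = (C, W)" by (rule prod.exhaust)
    have "g ` C \<subseteq> W" "disjnt W C" using bspec[OF g(2) p(1)] bspec[OF F(4) p(1)] CW by simp_all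
    then show "g y \<noteq> y" using p(2) unfolding CW by (auto simp: disjnt_iff)
  qed
qed

lemma ext_supp_subset_regular_open:
  assumes "regular_open M U" and "\<And>x. x \<in> topspace M - U \<Longrightarrow> g x = x"
  shows "ext_supp M g \<subseteq> U"
proof -
  have "{x \<in> topspace M. g x \<noteq> x} \<subseteq> U" using assms(2) by blast
  then have "ext_supp M g \<subseteq> M interior_of (M closure_of U)"
    unfolding ext_supp_def by (rule interior_of_mono[OF closure_of_mono])
  with assms(1) show ?thesis by (simp add: regular_open_def)
qed

lemma openin_subset_ext_supp:
  assumes "openin M S" and "\<And>x. x \<in> S \<Longrightarrow> g x \<noteq> x"
  shows "S \<subseteq> ext_supp M g"
proof -
  have "S \<subseteq> {x \<in> topspace M. g x \<noteq> x}"
    using assms openin_subset by blast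
  also have "\<dots> \<subseteq> M closure_of {x \<in> topspace M. g x \<noteq> x}"
    by (rule closure_of_subset) blast
  finally show ?thesis
    unfolding ext_supp_def using assms(1) by (rule interior_of_maximal)
qed

section \<open>Collared balls\<close>

locale ball_embedding =
  fixes M :: "'a topology" and n :: nat and e :: "(nat \<Rightarrow> real) \<Rightarrow> 'a"
  assumes embedding: "embedding_map (subtopology (Euclidean_space n) (eball n 2)) M e"
begin

lemma homeomorphic_map_e:
  "homeomorphic_map (subtopology (Euclidean_space n) (eball n 2)) (subtopology M (e ` eball n 2)) e"
  using embedding by (simp add: embedding_map_def)

lemma continuous_map_e: "continuous_map (subtopology (Euclidean_space n) (eball n 2)) M e"
  using homeomorphic_map_e continuous_map_into_fulltopology homeomorphic_imp_continuous_map by blast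

lemma inj_on_e: "inj_on e (eball n 2)"
  using homeomorphic_imp_injective_map[OF homeomorphic_map_e] by simp

lemma image_eball_subset_topspace: "e ` eball n 2 \<subseteq> topspace M"
  using continuous_map_image_subset_topspace[OF continuous_map_e] by simp

lemma continuous_map_inv_e:
  "continuous_map (subtopology M (e ` eball n 2)) (subtopology (Euclidean_space n) (eball n 2))
     (inv_into (eball n 2) e)"
proof -
  obtain e' where "homeomorphic_maps (subtopology (Euclidean_space n) (eball n 2))
                     (subtopology M (e ` eball n 2)) e e'"
    using homeomorphic_map_e homeomorphic_map_maps by blast
  then have cont: "continuous_map (subtopology M (e ` eball n 2)) (subtopology (Euclidean_space n) (eball n 2)) e'"
    and inv: "\<And>x. x \<in> eball n 2 \<Longrightarrow> e' (e x) = x"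
    by (auto simp: homeomorphic_maps_def)
  show ?thesis
  proof (rule continuous_map_eq[OF cont])
    fix p assume "p \<in> topspace (subtopology M (e ` eball n 2))"
    then obtain x where "x \<in> eball n 2" "p = e x" by auto
    then show "e' p = inv_into (eball n 2) e p" using inv inv_into_f_f[OF inj_on_e] by simp
  qed
qed

lemma compactin_image_eball: "\<lbrakk>0 \<le> r; r \<le> 2\<rbrakk> \<Longrightarrow> compactin M (e ` eball n r)"
  using compactin_eball eball_subset_eball
  by (intro image_compactin[OF _ continuous_map_e]) (simp add: compactin_subtopology)

lemma exists_eball_image_subset:
  assumes U: "openin M U" and \<rho>: "0 \<le> \<rho>" "\<rho> < 2" and sub: "e ` eball n \<rho> \<subseteq> U"
  obtains r where "\<rho> < r" "r < 2" "e ` eball n r \<subseteq> U"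
proof -
  define S where "S = {x \<in> eball n 2. e x \<notin> U}"
  have "closedin (subtopology (Euclidean_space n) (eball n 2))
          {x \<in> topspace (subtopology (Euclidean_space n) (eball n 2)). e x \<in> topspace M - U}"
    by (rule closedin_continuous_map_preimage[OF continuous_map_e]) (use U in blast)
  moreover have "{x \<in> topspace (subtopology (Euclidean_space n) (eball n 2)). e x \<in> topspace M - U} = S"
    using image_eball_subset_topspace by (auto simp: S_def)
  ultimately have "closedin (subtopology (Euclidean_space n) (eball n 2)) S" by simp
  then have "compactin (Euclidean_space n) S"
    using compactin_eball[of 2 n] closedin_compact_space compact_space_subtopology
    by (metis compactin_subtopology zero_le_numeral)
  moreover have "S \<inter> eball n \<rho> = {}" using sub by (auto simp: S_def)
  ultimately obtain r where r: "\<rho> < r" "r < 2" "S \<inter> eball n r = {}"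
    using \<rho> by (rule compactin_disjoint_larger_eball)
  have "e ` eball n r \<subseteq> U"
  proof
    fix p assume "p \<in> e ` eball n r"
    then obtain x where x: "x \<in> eball n r" "p = e x" by blast
    moreover have "eball n r \<subseteq> eball n 2" using r \<rho> by (intro eball_subset_eball) simp_all
    ultimately show "p \<in> U" using r(3) by (auto simp: S_def)
  qed
  with r(1,2) show thesis by (rule that)
qed

lemma image_open_eball_disjoint_mboundary:
  assumes "1 \<le> n" shows "e ` open_eball n 2 \<inter> mboundary M n = {}"
proof (rule image_disjoint_mboundary[OF assms openin_open_eball])
  show "continuous_map (subtopology (Euclidean_space n) (open_eball n 2)) M e"
    using continuous_map_e open_eball_subset_eball by (rule continuous_map_from_subtopology_mono)
  show "inj_on e (open_eball n 2)"
    using inj_on_e open_eball_subset_eball by (rule inj_on_subset)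
qed

definition transplant :: "((nat \<Rightarrow> real) \<Rightarrow> nat \<Rightarrow> real) \<Rightarrow> 'a \<Rightarrow> 'a" where
  "transplant \<psi> p = (if p \<in> e ` eball n 2 then e (\<psi> (inv_into (eball n 2) e p)) else p)"

lemma transplant_image: "x \<in> eball n 2 \<Longrightarrow> transplant \<psi> (e x) = e (\<psi> x)"
  by (simp add: transplant_def inv_into_f_f[OF inj_on_e])

lemma transplant_outside: "p \<notin> e ` eball n 2 \<Longrightarrow> transplant \<psi> p = p"
  by (simp add: transplant_def)

lemma transplant_inverse:
  assumes "\<psi> ` eball n 2 \<subseteq> eball n 2" and "\<And>x. x \<in> eball n 2 \<Longrightarrow> \<kappa> (\<psi> x) = x"
  shows "transplant \<kappa> (transplant \<psi> p) = p"
proof (cases "p \<in> e ` eball n 2")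
  case True
  then obtain x where "x \<in> eball n 2" "p = e x" by blast
  with assms show ?thesis by (auto simp: transplant_image)
qed (simp add: transplant_outside)

end

locale manifold_ball_embedding = ball_embedding +
  assumes manifold: "topological_manifold M n"
begin

lemma Hausdorff: "Hausdorff_space M"
  using manifold by (simp add: topological_manifold_def)

lemma openin_image_open_eball:
  assumes "0 \<le> r" "r \<le> 2" shows "openin M (e ` open_eball n r)"
proof -
  have sub: "open_eball n r \<subseteq> eball n 2"
    using open_eball_subset_eball eball_subset_eball[OF assms] by blast
  show ?thesis
  proof (rule openin_image_manifold[OF manifold openin_open_eball])
    show "continuous_map (subtopology (Euclidean_space n) (open_eball n r)) M e"
      using continuous_map_e sub by (rule continuous_map_from_subtopology_mono)
    show "inj_on e (open_eball n r)"
      using inj_on_e sub by (rule inj_on_subset)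
  qed
qed

lemma continuous_map_transplant:
  assumes \<psi>: "continuous_map (Euclidean_space n) (Euclidean_space n) \<psi>" "\<psi> ` eball n 2 \<subseteq> eball n 2"
    and stays: "\<And>x. x \<in> eball n 2 \<Longrightarrow> 4 \<le> sqnorm n x \<Longrightarrow> \<psi> x = x"
  shows "continuous_map M M (transplant \<psi>)"
proof -
  let ?A = "e ` eball n 2"
  have "closedin M ?A"
    using compactin_imp_closedin[OF Hausdorff compactin_image_eball] by simp
  then have cl: "M closure_of ?A = ?A" by (simp add: closure_of_closedin)
  have "continuous_map (subtopology (Euclidean_space n) (eball n 2)) (subtopology (Euclidean_space n) (eball n 2)) \<psi>"
    using \<psi> continuous_map_from_subtopology by (auto simp: continuous_map_in_subtopology)
  then have on_A: "continuous_map (subtopology M ?A) M (e \<circ> \<psi> \<circ> inv_into (eball n 2) e)"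
    using continuous_map_inv_e continuous_map_e by (metis continuous_map_compose)
  show ?thesis
    unfolding transplant_def[abs_def]
  proof (rule continuous_map_cases)
    show "continuous_map (subtopology M (M closure_of {p. p \<in> ?A})) M (\<lambda>p. e (\<psi> (inv_into (eball n 2) e p)))"
      using on_A by (simp add: cl comp_def)
    show "continuous_map (subtopology M (M closure_of {p. p \<notin> ?A})) M (\<lambda>p. p)"
      by (rule continuous_map_from_subtopology) (simp add: continuous_map_id[unfolded id_def])
  next
    fix p assume "p \<in> M frontier_of {p. p \<in> ?A}"
    then have "p \<in> ?A" "p \<notin> M interior_of ?A" by (auto simp: cl frontier_of_def)
    moreover have "e ` open_eball n 2 \<subseteq> M interior_of ?A"
      using openin_image_open_eball[of 2] open_eball_subset_eball
      by (intro interior_of_maximal) auto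
    ultimately obtain x where "x \<in> eball n 2" "x \<notin> open_eball n 2" "p = e x" by blast
    then have "\<psi> x = x" using stays by (auto simp: open_eball_def eball_def not_less)
    with \<open>x \<in> eball n 2\<close> \<open>p = e x\<close> show "e (\<psi> (inv_into (eball n 2) e p)) = p"
      by (simp add: inv_into_f_f[OF inj_on_e])
  qed
qed

lemma transplant_in_Homeo:
  assumes \<psi>: "continuous_map (Euclidean_space n) (Euclidean_space n) \<psi>"
    and \<kappa>: "continuous_map (Euclidean_space n) (Euclidean_space n) \<kappa>"
    and inverse: "\<And>x. \<kappa> (\<psi> x) = x" "\<And>x. \<psi> (\<kappa> x) = x"
    and stays: "\<And>x. 4 \<le> sqnorm n x \<Longrightarrow> \<psi> x = x"
  shows "transplant \<psi> \<in> Homeo M"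
proof -
  have stays': "\<And>x. 4 \<le> sqnorm n x \<Longrightarrow> \<kappa> x = x" using stays inverse(1) by metis
  have "inj \<psi>" "inj \<kappa>" using inverse by (metis injI)+
  then have maps: "\<psi> ` eball n 2 \<subseteq> eball n 2" "\<kappa> ` eball n 2 \<subseteq> eball n 2"
    using image_eball_subset_if_fixes_outside[of n _ 2] \<psi> \<kappa> stays stays' by simp_all
  have "homeomorphic_maps M M (transplant \<psi>) (transplant \<kappa>)"
    unfolding homeomorphic_maps_def
    using continuous_map_transplant[OF \<psi> maps(1)] continuous_map_transplant[OF \<kappa> maps(2)]
      transplant_inverse[OF maps(1) inverse(1)] transplant_inverse[OF maps(2) inverse(2)]
      stays stays' by blast
  moreover have "transplant \<psi> p = p" if "p \<notin> topspace M" for p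
    using that image_eball_subset_topspace by (auto intro: transplant_outside)
  ultimately show ?thesis by (auto simp: Homeo_def homeomorphic_map_maps)
qed

lemma exists_homeo_moving_eball:
  assumes "1 \<le> n" "0 \<le> s" "s < r" "r \<le> 2"
  obtains h where "h \<in> Homeo M" "\<And>p. p \<in> topspace M - e ` open_eball n r \<Longrightarrow> h p = p"
    "\<And>p. p \<in> e ` eball n s \<Longrightarrow> h p \<noteq> p"
proof
  let ?h = "transplant (ball_push n r)"
  have r2: "r\<^sup>2 \<le> 4" using assms power_mono[of r 2 2] by simp
  have stays: "\<And>x. r\<^sup>2 \<le> sqnorm n x \<Longrightarrow> ball_push n r x = x"
    using ball_push_eq_self_iff[OF assms(1)] by blast
  show "?h \<in> Homeo M"
    using continuous_map_ball_push[OF assms(1)] continuous_map_ball_push_inv[OF assms(1), of r]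
    by (rule transplant_in_Homeo) (use stays r2 in auto)
  have "inj (ball_push n r)" by (metis injI ball_push_inv_push)
  moreover have "\<And>x. 2\<^sup>2 \<le> sqnorm n x \<Longrightarrow> ball_push n r x = x" using stays r2 by simp
  ultimately have maps: "ball_push n r ` eball n 2 \<subseteq> eball n 2"
    by (rule image_eball_subset_if_fixes_outside[OF continuous_map_ball_push[OF assms(1)]])
  show "?h p = p" if p: "p \<in> topspace M - e ` open_eball n r" for p
  proof (cases "p \<in> e ` eball n 2")
    case True
    then obtain x where x: "x \<in> eball n 2" "p = e x" by blast
    then have "r\<^sup>2 \<le> sqnorm n x" using p by (auto simp: open_eball_def eball_def not_less)
    then show ?thesis using x stays by (simp add: transplant_image)
  qed (simp add: transplant_outside)
  show "?h p \<noteq> p" if p: "p \<in> e ` eball n s" for p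
  proof -
    obtain x where x: "x \<in> eball n s" "p = e x" using p by blast
    have "s\<^sup>2 < r\<^sup>2" using assms by (simp add: power_strict_mono)
    then have "ball_push n r x \<noteq> x"
      using x(1) ball_push_eq_self_iff[OF assms(1)] by (auto simp: eball_sqnorm)
    moreover have "x \<in> eball n 2" using x(1) eball_subset_eball[of s 2 n] assms by auto
    ultimately have "e (ball_push n r x) \<noteq> e x"
      using maps inj_on_e by (metis image_subset_iff inj_on_eq_iff)
    then show ?thesis using x \<open>x \<in> eball n 2\<close> by (simp add: transplant_image)
  qed
qed

lemma exists_element_moving_eball:
  assumes "1 \<le> n" and "compact_space M" and "locally_approximating M n G"
    and "chart_domain M n C" "e ` eball n r \<subseteq> C" and "0 \<le> s" "s < r" "r < 2"
  obtains g where "g \<in> G" "\<And>p. p \<in> topspace M - e ` open_eball n r \<Longrightarrow> g p = p"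
    "\<And>p. p \<in> e ` eball n s \<Longrightarrow> g p \<noteq> p"
proof -
  let ?O = "e ` open_eball n r"
  have "0 \<le> r" "r \<le> 2" using assms by simp_all
  have O: "openin M ?O" using openin_image_open_eball[OF \<open>0 \<le> r\<close> \<open>r \<le> 2\<close>] .
  have "closedin M (e ` eball n r)"
    using compactin_imp_closedin[OF Hausdorff compactin_image_eball[OF \<open>0 \<le> r\<close> \<open>r \<le> 2\<close>]] .
  then have cl: "M closure_of ?O \<subseteq> e ` eball n r"
    using open_eball_subset_eball by (intro closure_of_minimal) auto
  also have "\<dots> \<subseteq> e ` open_eball n 2"
    using eball_subset_open_eball[OF \<open>0 \<le> r\<close> \<open>r < 2\<close>] by blast
  finally have "M closure_of ?O \<inter> mboundary M n = {}"
    using image_open_eball_disjoint_mboundary[OF assms(1)] by blast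
  moreover have "compactin M (M closure_of ?O)"
    using closedin_compact_space[OF assms(2) closedin_closure_of] .
  moreover have "in_single_chart M n (M closure_of ?O)"
    using assms(4,5) cl unfolding in_single_chart_def by blast
  ultimately have dense: "co_dense M (rel_supp M G ?O) (rel_supp M (Homeo M) ?O)"
    using assms(3) O unfolding locally_approximating_def by blast
  obtain h where h: "h \<in> Homeo M" "\<And>p. p \<in> topspace M - ?O \<Longrightarrow> h p = p"
    "\<And>p. p \<in> e ` eball n s \<Longrightarrow> h p \<noteq> p"
    using exists_homeo_moving_eball[OF assms(1,6,7) \<open>r \<le> 2\<close>] by blast
  have "h \<in> rel_supp M (Homeo M) ?O" using h(1,2) by (simp add: rel_supp_def)
  moreover have "continuous_map M M h"
    using h(1) by (simp add: Homeo_def homeomorphic_imp_continuous_map)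
  moreover have "compactin M (e ` eball n s)"
    using compactin_image_eball assms(6,7,8) by simp
  ultimately obtain g where g: "g \<in> rel_supp M G ?O" "\<And>p. p \<in> e ` eball n s \<Longrightarrow> g p \<noteq> p"
    using co_dense_fixed_point_free[OF assms(2) Hausdorff dense _ _ _ h(3)] by blast
  show thesis
  proof (rule that)
    show "g \<in> G" "\<And>p. p \<in> topspace M - ?O \<Longrightarrow> g p = p"
      using g(1) by (simp_all add: rel_supp_def)
  qed (fact g(2))
qed

lemma exists_D_set_between:
  assumes "1 \<le> n" and "compact_space M" and "locally_approximating M n G"
    and "regular_open M U" and "chart_domain M n C" "U \<subseteq> C"
    and "0 \<le> \<rho>" "\<rho> < 2" "e ` eball n \<rho> \<subseteq> U"
  shows "\<exists>W\<in>D_set M G. W \<subseteq> U \<and> e ` eball n \<rho> \<subseteq> M interior_of W"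
proof -
  have "openin M U" using assms(4) by (simp add: regular_open_def)
  then obtain r where r: "\<rho> < r" "r < 2" "e ` eball n r \<subseteq> U"
    using assms(7-9) by (rule exists_eball_image_subset)
  define s where "s = (\<rho> + r) / 2"
  have s: "0 \<le> s" "\<rho> < s" "s < r" using r(1) assms(7) by (simp_all add: s_def)
  have "e ` eball n r \<subseteq> C" using r(3) assms(6) by blast
  then obtain g where g: "g \<in> G" "\<And>p. p \<in> topspace M - e ` open_eball n r \<Longrightarrow> g p = p"
    "\<And>p. p \<in> e ` eball n s \<Longrightarrow> g p \<noteq> p"
    by (rule exists_element_moving_eball[OF assms(1-3,5) _ s(1,3) r(2)]) blast
  have "ext_supp M g \<subseteq> U"
    using g(2) r(3) open_eball_subset_eball by (intro ext_supp_subset_regular_open[OF assms(4)]) blast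
  moreover have "e ` eball n \<rho> \<subseteq> M interior_of (ext_supp M g)"
  proof -
    have "e ` eball n \<rho> \<subseteq> e ` open_eball n s"
      using eball_subset_open_eball[OF assms(7) s(2)] by blast
    also have "\<dots> \<subseteq> ext_supp M g"
    proof (rule openin_subset_ext_supp)
      show "openin M (e ` open_eball n s)" using openin_image_open_eball s(1,3) r(2) by simp
      show "g p \<noteq> p" if "p \<in> e ` open_eball n s" for p
        using g(3) that open_eball_subset_eball by blast
    qed
    finally show ?thesis by (simp add: ext_supp_def)
  qed
  ultimately show ?thesis using g(1) unfolding D_set_def by blast
qed

end

theorem lemma2p3:
  fixes M :: "'a topology" and n :: nat and G :: "('a \<Rightarrow> 'a) set" and U V :: "'a set"
  assumes "topological_manifold M n" and "n \<ge> 1"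
    and "compact_space M" and "connected_space M"
    and "homeo_subgroup M G" and "locally_approximating M n G"
    and "regular_open M U"
    and "\<exists>C. chart_domain M n C \<and> compactly_contained M n U C"
    and "V \<subseteq> U" and "compactly_contained M n V U"
  shows "\<exists>W\<in>D_set M G. W \<subseteq> U \<and> compactly_contained M n V W"
proof -
  have "M interior_of U = U"
    using assms(7) by (simp add: regular_open_def interior_of_openin)
  then obtain D where D: "collared_ball M n D" "V \<subseteq> D" "D \<subseteq> U"
    using assms(10) unfolding compactly_contained_def by auto
  then obtain e where e: "embedding_map (subtopology (Euclidean_space n) (eball n 2)) M e"
    and D_eq: "D = e ` eball n 1"
    unfolding collared_ball_def by blast
  interpret manifold_ball_embedding M n e
    using e assms(1) by (simp add: manifold_ball_embedding_def manifold_ball_embedding_axioms_def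
        ball_embedding_def)
  obtain C D' where C: "chart_domain M n C" "U \<subseteq> D'" "D' \<subseteq> M interior_of C"
    using assms(8) unfolding compactly_contained_def by blast
  then have "U \<subseteq> C" using interior_of_subset[of M C] by blast
  then obtain W where "W \<in> D_set M G" "W \<subseteq> U" "D \<subseteq> M interior_of W"
    using exists_D_set_between[OF assms(2,3,6,7) C(1) _ _ _ D(3)[unfolded D_eq]] D_eq by auto
  then show ?thesis
    using D(1,2) unfolding compactly_contained_def by blast
qed

end
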